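(* There exists a PBD$(53,\{3,5\})$ of dimension three.
   Context: For a positive integer $v$ and $K \subseteq \{2,3,4,\dots\}$, a pairwise balanced design PBD$(v,K)$ is a pair $(X,\mathcal{B})$ where $X$ is a $v$-set of points and $\mathcal{B}$ is a family of subsets of $X$ (blocks), each of size in $K$, such that any two distinct points of $X$ lie together in exactly one block. A flat (subdesign) is a pair $(Y,\mathcal{B}_Y)$ with $Y \subseteq X$ and $\mathcal{B}_Y = \{B \in \mathcal{B} : B \subseteq Y\}$ such that any two distinct points of $Y$ lie together in exactly one block of $\mathcal{B}_Y$; it is proper if $Y \ne X$. The dimension of the PBD is the maximum integer $d$ such that every set of $d$ points is contained in a proper flat. *)

theory Defs
  imports Main
begin

definition is_PBD :: "nat \<Rightarrow> nat set \<Rightarrow> 'a set \<Rightarrow> 'a set set \<Rightarrow> bool" where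
  "is_PBD v K X \<B> \<longleftrightarrow> finite X \<and> card X = v \<and>
     (\<forall>B\<in>\<B>. B \<subseteq> X \<and> card B \<in> K) \<and>
     (\<forall>x\<in>X. \<forall>y\<in>X. x \<noteq> y \<longrightarrow> (\<exists>!B. B \<in> \<B> \<and> x \<in> B \<and> y \<in> B))"

definition is_flat :: "'a set \<Rightarrow> 'a set set \<Rightarrow> 'a set \<Rightarrow> bool" where
  "is_flat X \<B> Y \<longleftrightarrow> Y \<subseteq> X \<and>
     (\<forall>x\<in>Y. \<forall>y\<in>Y. x \<noteq> y \<longrightarrow> (\<exists>!B. B \<in> \<B> \<and> B \<subseteq> Y \<and> x \<in> B \<and> y \<in> B))"

definition is_proper_flat :: "'a set \<Rightarrow> 'a set set \<Rightarrow> 'a set \<Rightarrow> bool" where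
  "is_proper_flat X \<B> Y \<longleftrightarrow> is_flat X \<B> Y \<and> Y \<noteq> X"

definition sets_in_proper_flats :: "'a set \<Rightarrow> 'a set set \<Rightarrow> nat \<Rightarrow> bool" where
  "sets_in_proper_flats X \<B> d \<longleftrightarrow>
     (\<forall>S. S \<subseteq> X \<and> card S = d \<longrightarrow> (\<exists>Y. is_proper_flat X \<B> Y \<and> S \<subseteq> Y))"

text \<open>Dimension = maximum d with every d-set of points in a proper flat
  (maximum taken over d with d-sets existing, i.e. d \<le> |X|).\<close>
definition PBD_dimension :: "'a set \<Rightarrow> 'a set set \<Rightarrow> nat" where
  "PBD_dimension X \<B> = (GREATEST d. d \<le> card X \<and> sets_in_proper_flats X \<B> d)"

end

theory Submission
  imports Defs "HOL-Library.Cardinality" "HOL-Library.Countable"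
begin

text \<open>
  Let F be a finite field with q >= 3 elements. Delete from PG(3, F) the plane at infinity and
  the plane b = 0, except for their common line L. The 1 + q + (q - 1) q^2 remaining points,
  with the traces of the projective lines that keep at least two of them, form a linear space:
  lines meeting L keep q + 1 points, the others lose their point on b = 0 and keep q - 1.
  For q = 4 this is a PBD(53, {3, 5}). Every other projective plane cuts out a proper flat and
  any three points lie on one of them. Conversely, the two points at infinity in the directions
  (0, 0, 1) and (0, 1, 0) together with the affine points (1, 0, 0) and (k, 0, 0), k \<noteq> 0, 1,
  generate all points by repeatedly adding the blocks through two points already obtained,
  so no proper flat contains them and the dimension is exactly 3.
\<close>

section \<open>Flats and dimension of pairwise balanced designs\<close>

definition block_closed :: "'a set set \<Rightarrow> 'a set \<Rightarrow> bool" where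
  "block_closed \<B> Y \<longleftrightarrow> (\<forall>B\<in>\<B>. \<forall>x\<in>B. \<forall>y\<in>B. x \<noteq> y \<longrightarrow> x \<in> Y \<longrightarrow> y \<in> Y \<longrightarrow> B \<subseteq> Y)"

lemma block_closedD:
  "block_closed \<B> Y \<Longrightarrow> B \<in> \<B> \<Longrightarrow> x \<in> B \<Longrightarrow> y \<in> B \<Longrightarrow> x \<noteq> y \<Longrightarrow> x \<in> Y \<Longrightarrow> y \<in> Y \<Longrightarrow> B \<subseteq> Y"
  unfolding block_closed_def by blast

lemma is_flat_iff_block_closed:
  assumes "is_PBD v K X \<B>"
  shows "is_flat X \<B> Y \<longleftrightarrow> Y \<subseteq> X \<and> block_closed \<B> Y"
proof
  assume flat: "is_flat X \<B> Y"
  have "B \<subseteq> Y" if B: "B \<in> \<B>" "x \<in> B" "y \<in> B" "x \<noteq> y" "x \<in> Y" "y \<in> Y" for B x y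
  proof -
    obtain B' where "B' \<in> \<B>" "B' \<subseteq> Y" "x \<in> B'" "y \<in> B'"
      using flat B unfolding is_flat_def by blast
    moreover have "x \<in> X" "y \<in> X" using flat B unfolding is_flat_def by blast+
    ultimately have "B = B'" using assms B unfolding is_PBD_def by blast
    with \<open>B' \<subseteq> Y\<close> show ?thesis by simp
  qed
  then show "Y \<subseteq> X \<and> block_closed \<B> Y"
    using flat unfolding is_flat_def block_closed_def by blast
next
  assume Y: "Y \<subseteq> X \<and> block_closed \<B> Y"
  show "is_flat X \<B> Y"
    unfolding is_flat_def
  proof (intro conjI ballI impI)
    fix x y assume xy: "x \<in> Y" "y \<in> Y" "x \<noteq> y"
    then have "\<exists>!B. B \<in> \<B> \<and> x \<in> B \<and> y \<in> B"
      using assms Y unfolding is_PBD_def by blast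
    then obtain B where B: "B \<in> \<B>" "x \<in> B" "y \<in> B"
      and uniq: "\<And>B'. B' \<in> \<B> \<and> x \<in> B' \<and> y \<in> B' \<Longrightarrow> B' = B" by blast
    have "B \<subseteq> Y" using Y B xy block_closedD by metis
    with B uniq show "\<exists>!B. B \<in> \<B> \<and> B \<subseteq> Y \<and> x \<in> B \<and> y \<in> B" by blast
  qed (use Y in simp)
qed

lemma PBD_dimension_eqI:
  assumes "finite X" and "sets_in_proper_flats X \<B> d"
    and "S \<subseteq> X" "card S = Suc d" and spanning: "\<And>Y. is_flat X \<B> Y \<Longrightarrow> S \<subseteq> Y \<Longrightarrow> Y = X"
  shows "PBD_dimension X \<B> = d"
  unfolding PBD_dimension_def
proof (rule Greatest_equality)
  show "d \<le> card X \<and> sets_in_proper_flats X \<B> d"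
    using assms card_mono[OF \<open>finite X\<close> \<open>S \<subseteq> X\<close>] by simp
next
  fix e assume e: "e \<le> card X \<and> sets_in_proper_flats X \<B> e"
  show "e \<le> d"
  proof (rule ccontr)
    assume "\<not> e \<le> d"
    then obtain T where "S \<subseteq> T" "T \<subseteq> X" "card T = e"
      using exists_subset_between[of S e X] assms e by (metis not_less_eq_eq)
    moreover obtain Y where "is_proper_flat X \<B> Y" "T \<subseteq> Y"
      using e \<open>T \<subseteq> X\<close> \<open>card T = e\<close> unfolding sets_in_proper_flats_def by blast
    ultimately show False using spanning unfolding is_proper_flat_def by blast
  qed
qed

lemma ex1_image_iff:
  assumes "inj f"
  shows "(\<exists>!y. y \<in> f ` A \<and> P y) \<longleftrightarrow> (\<exists>!x. x \<in> A \<and> P (f x))"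
proof
  assume "\<exists>!y. y \<in> f ` A \<and> P y"
  then obtain x where "x \<in> A" "P (f x)" and "\<And>y. y \<in> f ` A \<and> P y \<Longrightarrow> y = f x" by blast
  with assms show "\<exists>!x. x \<in> A \<and> P (f x)" by (metis image_eqI inj_eq)
next
  assume "\<exists>!x. x \<in> A \<and> P (f x)"
  then show "\<exists>!y. y \<in> f ` A \<and> P y" by blast
qed

lemma is_PBD_image:
  assumes "inj f" and "is_PBD v K X \<B>"
  shows "is_PBD v K (f ` X) (image f ` \<B>)"
proof -
  have inj_image: "inj (image f)" using \<open>inj f\<close> by (simp add: inj_on_def inj_image_eq_iff)
  have card_eq: "card (f ` A) = card A" for A using \<open>inj f\<close> by (simp add: card_image inj_on_subset)
  have unique: "\<exists>!B'. B' \<in> image f ` \<B> \<and> f x \<in> B' \<and> f y \<in> B'"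
    if "x \<in> X" "y \<in> X" "x \<noteq> y" for x y
    using assms that unfolding is_PBD_def
    by (simp add: ex1_image_iff[OF inj_image] inj_image_mem_iff)
  show ?thesis
    unfolding is_PBD_def
  proof (intro conjI ballI impI)
    fix x' y' assume "x' \<in> f ` X" "y' \<in> f ` X" "x' \<noteq> y'"
    then obtain x y where "x \<in> X" "y \<in> X" "x \<noteq> y" "x' = f x" "y' = f y" by blast
    then show "\<exists>!B'. B' \<in> image f ` \<B> \<and> x' \<in> B' \<and> y' \<in> B'" using unique by simp
  qed (use assms in \<open>auto simp: is_PBD_def card_eq\<close>)
qed

lemma is_flat_image_iff:
  assumes "inj f"
  shows "is_flat (f ` X) (image f ` \<B>) (f ` Y) \<longleftrightarrow> is_flat X \<B> Y"
proof -
  have "inj (image f)" using \<open>inj f\<close> by (simp add: inj_on_def inj_image_eq_iff)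
  then show ?thesis
    using assms unfolding is_flat_def
    by (simp add: ex1_image_iff inj_image_mem_iff inj_image_subset_iff inj_eq)
qed

lemma is_proper_flat_image_iff:
  "inj f \<Longrightarrow> is_proper_flat (f ` X) (image f ` \<B>) (f ` Y) \<longleftrightarrow> is_proper_flat X \<B> Y"
  by (simp add: is_proper_flat_def is_flat_image_iff inj_image_eq_iff)

lemma sets_in_proper_flats_image_iff:
  assumes "inj f"
  shows "sets_in_proper_flats (f ` X) (image f ` \<B>) d \<longleftrightarrow> sets_in_proper_flats X \<B> d"
proof
  assume H: "sets_in_proper_flats (f ` X) (image f ` \<B>) d"
  show "sets_in_proper_flats X \<B> d"
    unfolding sets_in_proper_flats_def
  proof (intro allI impI)
    fix S assume "S \<subseteq> X \<and> card S = d"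
    then have "f ` S \<subseteq> f ` X \<and> card (f ` S) = d"
      using assms by (auto simp: card_image inj_on_subset)
    then obtain Y' where Y': "is_proper_flat (f ` X) (image f ` \<B>) Y'" "f ` S \<subseteq> Y'"
      using H unfolding sets_in_proper_flats_def by blast
    then have "Y' \<subseteq> f ` X" unfolding is_proper_flat_def is_flat_def by blast
    then have "Y' = f ` (f -` Y')" by auto
    with Y' assms have "is_proper_flat X \<B> (f -` Y') \<and> S \<subseteq> f -` Y'"
      by (metis image_subset_iff_subset_vimage is_proper_flat_image_iff)
    then show "\<exists>Y. is_proper_flat X \<B> Y \<and> S \<subseteq> Y" by blast
  qed
next
  assume H: "sets_in_proper_flats X \<B> d"
  show "sets_in_proper_flats (f ` X) (image f ` \<B>) d"
    unfolding sets_in_proper_flats_def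
  proof (intro allI impI)
    fix S' assume S': "S' \<subseteq> f ` X \<and> card S' = d"
    then have "S' = f ` (f -` S')" by auto
    moreover have "f -` S' \<subseteq> X" using S' assms by (blast dest: inj_image_mem_iff[THEN iffD1])
    moreover have "card (f -` S') = d"
      using S' assms calculation(1) by (metis card_image inj_on_subset subset_UNIV)
    ultimately obtain Y where "is_proper_flat X \<B> Y" "f -` S' \<subseteq> Y"
      using H unfolding sets_in_proper_flats_def by blast
    with \<open>S' = f ` (f -` S')\<close> show "\<exists>Y'. is_proper_flat (f ` X) (image f ` \<B>) Y' \<and> S' \<subseteq> Y'"
      using assms by (metis image_mono is_proper_flat_image_iff)
  qed
qed

lemma PBD_dimension_image:
  "inj f \<Longrightarrow> PBD_dimension (f ` X) (image f ` \<B>) = PBD_dimension X \<B>"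
  by (simp add: PBD_dimension_def sets_in_proper_flats_image_iff card_image inj_on_subset)

section \<open>Affine functions over a field\<close>

lemma affine_interpolation:
  fixes x y :: "'a::field"
  assumes "x \<noteq> y"
  obtains a m where "u = a + m * x" "v = a + m * y"
proof -
  define m where "m = (u - v) / (x - y)"
  have "m * (x - y) = u - v" using assms by (simp add: m_def)
  then have "v = (u - m * x) + m * y" by (simp add: algebra_simps)
  then show thesis using that[of "u - m * x" m] by simp
qed

lemma affine_eq_at_two_points:
  fixes x y :: "'a::field"
  assumes "x \<noteq> y" "a + m * x = a' + m' * x" "a + m * y = a' + m' * y"
  shows "a = a' \<and> m = m'"
proof -
  have "(m - m') * (x - y) = (a + m * x) - (a + m * y) - ((a' + m' * x) - (a' + m' * y))"
    by (simp add: algebra_simps)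
  also have "\<dots> = 0" using assms(2,3) by simp
  finally have "(m - m') * (x - y) = 0" .
  then have "m = m'" using assms(1) by simp
  then show ?thesis using assms(2) by simp
qed

lemma plane_interpolation:
  fixes b1 b2 b3 :: "'a::field"
  assumes "b1 \<noteq> b2" "c1 = a + q * b1" "c2 = a + q * b2" "c3 \<noteq> a + q * b3"
  obtains v1 v2 v3 where
    "g1 = v1 + v2 * b1 + v3 * c1" "g2 = v1 + v2 * b2 + v3 * c2" "g3 = v1 + v2 * b3 + v3 * c3"
proof -
  obtain u t where ut: "g1 = u + t * b1" "g2 = u + t * b2"
    using affine_interpolation[OF assms(1)] .
  define v3 where "v3 = (g3 - (u + t * b3)) / (c3 - (a + q * b3))"
  have v3: "v3 * (c3 - (a + q * b3)) = g3 - (u + t * b3)"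
    using assms(4) by (simp add: v3_def)
  have plane: "(u - v3 * a) + (t - v3 * q) * b + v3 * c = u + t * b + v3 * (c - (a + q * b))" for b c
    by (simp add: algebra_simps)
  show thesis
  proof (rule that[of "u - v3 * a" "t - v3 * q" v3])
    show "g1 = u - v3 * a + (t - v3 * q) * b1 + v3 * c1" "g2 = u - v3 * a + (t - v3 * q) * b2 + v3 * c2"
      unfolding plane using ut assms(2,3) by simp_all
    show "g3 = u - v3 * a + (t - v3 * q) * b3 + v3 * c3"
      unfolding plane v3 by simp
  qed
qed

lemma affine_eq_on_line_at_two_points:
  fixes b1 b2 :: "'a::field"
  assumes "b1 \<noteq> b2"
    and "u + t * b1 = v1 + v2 * b1 + v3 * (a + q * b1)" "u + t * b2 = v1 + v2 * b2 + v3 * (a + q * b2)"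
  shows "u + t * b = v1 + v2 * b + v3 * (a + q * b)"
proof -
  have affine: "v1 + v2 * x + v3 * (a + q * x) = (v1 + v3 * a) + (v2 + v3 * q) * x" for x
    by (simp add: algebra_simps)
  have "u = v1 + v3 * a \<and> t = v2 + v3 * q"
    using affine_eq_at_two_points[OF assms(1), of u t "v1 + v3 * a" "v2 + v3 * q"] assms(2,3)
    unfolding affine by simp
  then show ?thesis unfolding affine by simp
qed

section \<open>The design\<close>

text \<open>
  \<open>Aff b c g\<close> is the affine point \<open>(b, c, g)\<close>, used only with \<open>b \<noteq> 0\<close>; \<open>Dir s\<close> and \<open>Vert\<close> are
  the points at infinity in the directions \<open>(0, 1, s)\<close> and \<open>(0, 0, 1)\<close>.
\<close>
datatype 'a point = Vert | Dir 'a | Aff 'a 'a 'a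

definition line_at_infinity :: "'a point set" where
  "line_at_infinity = insert Vert (range Dir)"

definition affine_points :: "'a::zero point set" where
  "affine_points = {Aff b c g |b c g. b \<noteq> 0}"

definition points :: "'a::zero point set" where
  "points = line_at_infinity \<union> affine_points"

definition vertical_line :: "'a \<Rightarrow> 'a \<Rightarrow> 'a point set" where
  "vertical_line b c = insert Vert (range (Aff b c))"

definition level_line :: "'a::ring \<Rightarrow> 'a \<Rightarrow> 'a \<Rightarrow> 'a point set" where
  "level_line b s w = insert (Dir s) (range (\<lambda>c. Aff b c (w + s * c)))"

definition transversal :: "'a::ring \<Rightarrow> 'a \<Rightarrow> 'a \<Rightarrow> 'a \<Rightarrow> 'a point set" where
  "transversal a q u t = (\<lambda>b. Aff b (a + q * b) (u + t * b)) ` {b. b \<noteq> 0}"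

definition blocks :: "'a::ring point set set" where
  "blocks = {line_at_infinity} \<union> {vertical_line b c |b c. b \<noteq> 0} \<union> {level_line b s w |b s w. b \<noteq> 0}
     \<union> {transversal a q u t |a q u t. True}"

lemma mem_line_at_infinity [simp]:
  "Vert \<in> line_at_infinity" "Dir s \<in> line_at_infinity" "Aff b c g \<notin> line_at_infinity"
  by (auto simp: line_at_infinity_def)

lemma mem_points [simp]:
  "Vert \<in> points" "Dir s \<in> points" "Aff b c g \<in> points \<longleftrightarrow> b \<noteq> 0"
  by (auto simp: points_def affine_points_def)

lemma mem_vertical_line [simp]:
  "Vert \<in> vertical_line b c" "Dir s \<notin> vertical_line b c"
  "Aff b' c' g \<in> vertical_line b c \<longleftrightarrow> b' = b \<and> c' = c"
  by (auto simp: vertical_line_def)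

lemma mem_level_line [simp]:
  "Vert \<notin> level_line b s w" "Dir s' \<in> level_line b s w \<longleftrightarrow> s' = s"
  "Aff b' c g \<in> level_line b s w \<longleftrightarrow> b' = b \<and> g = w + s * c"
  by (auto simp: level_line_def)

lemma mem_transversal [simp]:
  "Vert \<notin> transversal a q u t" "Dir s \<notin> transversal a q u t"
  "Aff b c g \<in> transversal a q u t \<longleftrightarrow> b \<noteq> 0 \<and> c = a + q * b \<and> g = u + t * b"
  by (auto simp: transversal_def)

lemma line_at_infinity_subset_iff: "line_at_infinity \<subseteq> P \<longleftrightarrow> Vert \<in> P \<and> (\<forall>s. Dir s \<in> P)"
  by (auto simp: line_at_infinity_def)

lemma vertical_line_subset_iff: "vertical_line b c \<subseteq> P \<longleftrightarrow> Vert \<in> P \<and> (\<forall>g. Aff b c g \<in> P)"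
  by (auto simp: vertical_line_def)

lemma level_line_subset_iff: "level_line b s w \<subseteq> P \<longleftrightarrow> Dir s \<in> P \<and> (\<forall>c. Aff b c (w + s * c) \<in> P)"
  by (auto simp: level_line_def)

lemma transversal_subset_iff:
  "transversal a q u t \<subseteq> P \<longleftrightarrow> (\<forall>b. b \<noteq> 0 \<longrightarrow> Aff b (a + q * b) (u + t * b) \<in> P)"
  by (auto simp: transversal_def)

lemmas block_subset_iffs =
  line_at_infinity_subset_iff vertical_line_subset_iff level_line_subset_iff transversal_subset_iff

lemma points_cases [consumes 1, case_names at_infinity affine]:
  assumes "x \<in> points"
  obtains "x \<in> line_at_infinity" | b c g where "b \<noteq> 0" "x = Aff b c g"
  using assms unfolding points_def affine_points_def by blast

lemma blocks_cases [consumes 1, case_names at_infinity vertical level transversal]: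
  assumes "B \<in> blocks"
  obtains "B = line_at_infinity"
  | b c where "b \<noteq> 0" "B = vertical_line b c"
  | b s w where "b \<noteq> 0" "B = level_line b s w"
  | a q u t where "B = transversal a q u t"
  using assms unfolding blocks_def by blast

lemma blocks_intros:
  "line_at_infinity \<in> blocks"
  "b \<noteq> 0 \<Longrightarrow> vertical_line b c \<in> blocks"
  "b \<noteq> 0 \<Longrightarrow> level_line b s w \<in> blocks"
  "transversal a q u t \<in> blocks"
  unfolding blocks_def by blast+

lemma blocks_subset_points: "B \<in> blocks \<Longrightarrow> B \<subseteq> (points :: 'a::field point set)"
  by (elim blocks_cases) (auto simp: block_subset_iffs)

lemma level_line_eqI:
  fixes c c' :: "'a::field"
  assumes "c \<noteq> c'" "w + s * c = w' + s' * c" "w + s * c' = w' + s' * c'"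
  shows "level_line b s w = level_line b s' w'"
  using affine_eq_at_two_points[OF assms] by simp

lemma transversal_eqI:
  fixes b b' :: "'a::field"
  assumes "b \<noteq> b'"
    and "a + q * b = a' + q' * b" "a + q * b' = a' + q' * b'"
    and "u + t * b = u' + t' * b" "u + t * b' = u' + t' * b'"
  shows "transversal a q u t = transversal a' q' u' t'"
  using affine_eq_at_two_points[OF assms(1,2,3)] affine_eq_at_two_points[OF assms(1,4,5)] by simp

lemma block_through_two_points_unique:
  fixes B B' :: "'a::field point set"
  assumes "B \<in> blocks" "B' \<in> blocks" "x \<in> B \<inter> B'" "y \<in> B \<inter> B'" "x \<noteq> y"
  shows "B = B'"
  using assms
  by (elim blocks_cases; cases x; cases y; (auto; fail)?; clarsimp)
    (metis level_line_eqI transversal_eqI)+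

lemma ex_block_through_affine_pair:
  fixes b b' :: "'a::field"
  assumes "b \<noteq> 0" "b' \<noteq> 0"
  shows "\<exists>B\<in>blocks. Aff b c g \<in> B \<and> Aff b' c' g' \<in> B"
proof -
  consider "b = b'" "c = c'" | "b = b'" "c \<noteq> c'" | "b \<noteq> b'" by blast
  then show ?thesis
  proof cases
    case 1
    then show ?thesis using assms by (intro bexI[of _ "vertical_line b c"] blocks_intros) auto
  next
    case 2
    obtain w s where "g = w + s * c" "g' = w + s * c'"
      using affine_interpolation[OF \<open>c \<noteq> c'\<close>] .
    then show ?thesis using 2 assms by (intro bexI[of _ "level_line b s w"] blocks_intros) auto
  next
    case 3
    obtain a q where "c = a + q * b" "c' = a + q * b'"
      using affine_interpolation[OF \<open>b \<noteq> b'\<close>] .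
    moreover obtain u t where "g = u + t * b" "g' = u + t * b'"
      using affine_interpolation[OF \<open>b \<noteq> b'\<close>] .
    ultimately show ?thesis using assms by (intro bexI[of _ "transversal a q u t"] blocks_intros) auto
  qed
qed

lemma ex_block_through_infinite_and_affine:
  fixes b :: "'a::field"
  assumes "p \<in> line_at_infinity" "b \<noteq> 0"
  shows "\<exists>B\<in>blocks. p \<in> B \<and> Aff b c g \<in> B"
proof (cases p)
  case Vert
  then show ?thesis using assms by (intro bexI[of _ "vertical_line b c"] blocks_intros) auto
next
  case (Dir s)
  then show ?thesis using assms by (intro bexI[of _ "level_line b s (g - s * c)"] blocks_intros) auto
qed (use assms in simp)

lemma ex_block_through_two_points:
  fixes x y :: "'a::field point"
  assumes "x \<in> points" "y \<in> points"
  shows "\<exists>B\<in>blocks. x \<in> B \<and> y \<in> B"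
  using assms(1)
proof (cases rule: points_cases)
  case x: at_infinity
  from assms(2) show ?thesis
  proof (cases rule: points_cases)
    case at_infinity
    with x show ?thesis using blocks_intros(1) by blast
  next
    case (affine b c g)
    then show ?thesis using ex_block_through_infinite_and_affine[OF x] by simp
  qed
next
  case x: (affine b c g)
  from assms(2) show ?thesis
  proof (cases rule: points_cases)
    case at_infinity
    then show ?thesis using x ex_block_through_infinite_and_affine[of y b c g] by blast
  next
    case (affine b' c' g')
    then show ?thesis using x ex_block_through_affine_pair[of b b' c g c' g'] by simp
  qed
qed

lemma card_line_at_infinity: "card (line_at_infinity :: 'a::finite point set) = CARD('a) + 1"
proof -
  have "card (range (Dir :: 'a \<Rightarrow> 'a point)) = CARD('a)" by (simp add: card_image inj_on_def)
  then show ?thesis unfolding line_at_infinity_def by (simp add: image_iff)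
qed

lemma card_nonzero: "card {b :: 'a::{finite,zero}. b \<noteq> 0} = CARD('a) - 1"
  using card_Diff_singleton[of 0 "UNIV :: 'a set"] by (simp add: Collect_neg_eq Compl_eq_Diff_UNIV)

lemma card_blocks:
  fixes B :: "'a::{finite,field} point set"
  assumes "B \<in> blocks"
  shows "card B \<in> {CARD('a) - 1, CARD('a) + 1}"
  using assms
proof (cases rule: blocks_cases)
  case at_infinity
  then show ?thesis by (simp add: card_line_at_infinity)
next
  case (vertical b c)
  have "card (range (Aff b c)) = CARD('a)" by (simp add: card_image inj_on_def)
  then show ?thesis using vertical by (simp add: vertical_line_def image_iff)
next
  case (level b s w)
  have "card (range (\<lambda>c. Aff b c (w + s * c))) = CARD('a)" by (simp add: card_image inj_on_def)
  then show ?thesis using level by (simp add: level_line_def image_iff)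
next
  case (transversal a q u t)
  have "card B = card {b :: 'a. b \<noteq> 0}"
    unfolding transversal transversal_def by (simp add: card_image inj_on_def)
  then show ?thesis by (simp add: card_nonzero)
qed

lemma affine_points_eq: "affine_points = (\<lambda>(b, c, g). Aff b c g) ` ({b. b \<noteq> 0} \<times> UNIV \<times> UNIV)"
  by (auto simp: affine_points_def image_iff)

lemma finite_affine_points: "finite (affine_points :: 'a::{finite,zero} point set)"
  unfolding affine_points_eq by simp

lemma finite_points: "finite (points :: 'a::{finite,zero} point set)"
  unfolding points_def line_at_infinity_def using finite_affine_points by simp

lemma card_points: "card (points :: 'a::{finite,field} point set) = CARD('a) + 1 + (CARD('a) - 1) * CARD('a)^2"
proof -
  have "card (affine_points :: 'a point set) = (CARD('a) - 1) * CARD('a)^2"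
    unfolding affine_points_eq
    by (subst card_image) (auto simp: inj_on_def card_cartesian_product card_nonzero power2_eq_square)
  moreover have "card (line_at_infinity \<union> affine_points :: 'a point set)
      = card (line_at_infinity :: 'a point set) + card (affine_points :: 'a point set)"
    by (rule card_Un_disjoint[OF _ finite_affine_points]) (auto simp: line_at_infinity_def affine_points_def)
  ultimately show ?thesis
    unfolding points_def by (simp add: card_line_at_infinity)
qed

theorem is_PBD_points_blocks:
  "is_PBD (CARD('a) + 1 + (CARD('a) - 1) * CARD('a)^2) {CARD('a) - 1, CARD('a) + 1}
     (points :: 'a::{finite,field} point set) blocks"
  unfolding is_PBD_def
proof (intro conjI ballI impI)
  fix x y :: "'a point" assume "x \<in> points" "y \<in> points" "x \<noteq> y"
  then show "\<exists>!B. B \<in> blocks \<and> x \<in> B \<and> y \<in> B"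
    using ex_block_through_two_points block_through_two_points_unique by blast
qed (use card_blocks blocks_subset_points in \<open>simp_all add: card_points finite_points\<close>)

section \<open>Planes and the dimension of the design\<close>

definition level_plane :: "'a \<Rightarrow> 'a point set" where
  "level_plane b = line_at_infinity \<union> range (\<lambda>(c, g). Aff b c g)"

definition vertical_plane :: "'a::ring \<Rightarrow> 'a \<Rightarrow> 'a point set" where
  "vertical_plane a q = insert Vert {Aff b (a + q * b) g |b g. b \<noteq> 0}"

definition graph_plane :: "'a::ring \<Rightarrow> 'a \<Rightarrow> 'a \<Rightarrow> 'a point set" where
  "graph_plane v1 v2 v3 = insert (Dir v3) {Aff b c (v1 + v2 * b + v3 * c) |b c. b \<noteq> 0}"

definition planes :: "'a::ring point set set" where
  "planes = {level_plane b |b. b \<noteq> 0} \<union> {vertical_plane a q |a q. True} \<union> {graph_plane v1 v2 v3 |v1 v2 v3. True}"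

lemma mem_level_plane [simp]:
  "Vert \<in> level_plane b" "Dir s \<in> level_plane b" "Aff b' c g \<in> level_plane b \<longleftrightarrow> b' = b"
  by (auto simp: level_plane_def)

lemma mem_vertical_plane [simp]:
  "Vert \<in> vertical_plane a q" "Dir s \<notin> vertical_plane a q"
  "Aff b c g \<in> vertical_plane a q \<longleftrightarrow> b \<noteq> 0 \<and> c = a + q * b"
  by (auto simp: vertical_plane_def)

lemma mem_graph_plane [simp]:
  "Vert \<notin> graph_plane v1 v2 v3" "Dir s \<in> graph_plane v1 v2 v3 \<longleftrightarrow> s = v3"
  "Aff b c g \<in> graph_plane v1 v2 v3 \<longleftrightarrow> b \<noteq> 0 \<and> g = v1 + v2 * b + v3 * c"
  by (auto simp: graph_plane_def)

lemma line_at_infinity_subset_level_plane: "line_at_infinity \<subseteq> level_plane b"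
  by (auto simp: level_plane_def)

lemma planes_intros:
  "b \<noteq> 0 \<Longrightarrow> level_plane b \<in> planes" "vertical_plane a q \<in> planes" "graph_plane v1 v2 v3 \<in> planes"
  unfolding planes_def by blast+

lemma planes_cases [consumes 1, case_names level vertical graph]:
  assumes "P \<in> planes"
  obtains b where "b \<noteq> 0" "P = level_plane b" | a q where "P = vertical_plane a q"
  | v1 v2 v3 where "P = graph_plane v1 v2 v3"
  using assms unfolding planes_def by auto

lemma block_closed_level_plane: "block_closed blocks (level_plane (b0 :: 'a::field))"
  unfolding block_closed_def
proof (intro ballI impI)
  fix B x y assume "B \<in> blocks" "x \<in> B" "y \<in> B" "x \<noteq> y" "x \<in> level_plane b0" "y \<in> level_plane b0"
  then show "B \<subseteq> level_plane b0" by (elim blocks_cases; cases x; cases y) (auto simp: block_subset_iffs)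
qed

lemma block_closed_vertical_plane: "block_closed blocks (vertical_plane a q :: 'a::field point set)"
  unfolding block_closed_def
proof (intro ballI impI)
  fix B x y assume "B \<in> blocks" "x \<in> B" "y \<in> B" "x \<noteq> y" "x \<in> vertical_plane a q" "y \<in> vertical_plane a q"
  then show "B \<subseteq> vertical_plane a q"
    by (elim blocks_cases; cases x; cases y; (auto simp: block_subset_iffs; fail)?; clarsimp simp: block_subset_iffs)
      (metis affine_eq_at_two_points)
qed

lemma block_closed_graph_plane: "block_closed blocks (graph_plane v1 v2 v3 :: 'a::field point set)"
  unfolding block_closed_def
proof (intro ballI impI)
  fix B x y assume "B \<in> blocks" "x \<in> B" "y \<in> B" "x \<noteq> y" "x \<in> graph_plane v1 v2 v3" "y \<in> graph_plane v1 v2 v3"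
  then show "B \<subseteq> graph_plane v1 v2 v3"
    by (elim blocks_cases; cases x; cases y; (auto simp: block_subset_iffs; fail)?; clarsimp simp: block_subset_iffs)
      (metis affine_eq_at_two_points affine_eq_on_line_at_two_points)+
qed

lemma planes_block_closed: "P \<in> planes \<Longrightarrow> block_closed blocks (P :: 'a::field point set)"
  by (elim planes_cases) (simp_all add: block_closed_level_plane block_closed_vertical_plane block_closed_graph_plane)

lemma planes_subset_points: "P \<in> planes \<Longrightarrow> P \<subseteq> (points :: 'a::field point set)"
  by (elim planes_cases)
    (auto simp: level_plane_def vertical_plane_def graph_plane_def points_def affine_points_def)

lemma planes_neq_points:
  fixes k :: "'a::field" and P :: "'a point set"
  assumes "k \<noteq> 0" "k \<noteq> 1" "P \<in> planes"
  shows "P \<noteq> points"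
  using assms(3)
proof (cases rule: planes_cases)
  case (level b)
  have "Aff (if b = 1 then k else 1) 0 0 \<notin> P" "Aff (if b = 1 then k else 1) 0 (0::'a) \<in> points"
    using level assms(1,2) by auto
  then show ?thesis by blast
next
  case (vertical a q)
  then have "Dir 0 \<notin> P" by simp
  then show ?thesis using mem_points(2)[of 0] by blast
next
  case (graph v1 v2 v3)
  then have "Dir (v3 + 1) \<notin> P" by simp
  then show ?thesis using mem_points(2)[of "v3 + 1"] by blast
qed

lemma two_points_at_infinity_and_point_in_plane:
  fixes x :: "'a::field point"
  assumes "p \<in> line_at_infinity" "p' \<in> line_at_infinity" "x \<in> points"
  shows "\<exists>P\<in>planes. {p, p', x} \<subseteq> P"
  using assms(3)
proof (cases rule: points_cases)
  case at_infinity
  with assms(1,2) have "{p, p', x} \<subseteq> level_plane 1" using line_at_infinity_subset_level_plane[of 1] by blast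
  then show ?thesis by (rule bexI[OF _ planes_intros(1)[OF one_neq_zero]])
next
  case (affine b c g)
  with assms(1,2) have "{p, p', x} \<subseteq> level_plane b" using line_at_infinity_subset_level_plane[of b] by auto
  then show ?thesis using \<open>b \<noteq> 0\<close> by (intro bexI[OF _ planes_intros(1)])
qed

lemma point_at_infinity_and_affine_pair_in_plane:
  fixes b1 b2 :: "'a::field"
  assumes "p \<in> line_at_infinity" "b1 \<noteq> 0" "b2 \<noteq> 0"
  shows "\<exists>P\<in>planes. {p, Aff b1 c1 g1, Aff b2 c2 g2} \<subseteq> P"
proof (cases "b1 = b2")
  case True
  with assms have "{p, Aff b1 c1 g1, Aff b2 c2 g2} \<subseteq> level_plane b1"
    using line_at_infinity_subset_level_plane[of b1] by auto
  then show ?thesis using \<open>b1 \<noteq> 0\<close> by (intro bexI[OF _ planes_intros(1)])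
next
  case False
  show ?thesis
  proof (cases p)
    case Vert
    obtain a q where "c1 = a + q * b1" "c2 = a + q * b2"
      using affine_interpolation[OF False] .
    with Vert assms have "{p, Aff b1 c1 g1, Aff b2 c2 g2} \<subseteq> vertical_plane a q" by simp
    then show ?thesis by (rule bexI[OF _ planes_intros(2)])
  next
    case (Dir s)
    obtain u t where "g1 - s * c1 = u + t * b1" "g2 - s * c2 = u + t * b2"
      using affine_interpolation[OF False] .
    then have "g1 = u + t * b1 + s * c1" "g2 = u + t * b2 + s * c2"
      by (simp_all add: diff_eq_eq)
    with Dir assms have "{p, Aff b1 c1 g1, Aff b2 c2 g2} \<subseteq> graph_plane u t s" by simp
    then show ?thesis by (rule bexI[OF _ planes_intros(3)])
  qed (use assms in simp)
qed

lemma affine_triple_in_plane_of_neq: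
  fixes b1 b2 b3 :: "'a::field"
  assumes "b1 \<noteq> 0" "b2 \<noteq> 0" "b3 \<noteq> 0" "b1 \<noteq> b2"
  shows "\<exists>P\<in>planes. {Aff b1 c1 g1, Aff b2 c2 g2, Aff b3 c3 g3} \<subseteq> P"
proof -
  obtain a q where line: "c1 = a + q * b1" "c2 = a + q * b2"
    using affine_interpolation[OF \<open>b1 \<noteq> b2\<close>] .
  show ?thesis
  proof (cases "c3 = a + q * b3")
    case True
    with line assms have "{Aff b1 c1 g1, Aff b2 c2 g2, Aff b3 c3 g3} \<subseteq> vertical_plane a q" by simp
    then show ?thesis by (rule bexI[OF _ planes_intros(2)])
  next
    case False
    obtain v1 v2 v3 where
      "g1 = v1 + v2 * b1 + v3 * c1" "g2 = v1 + v2 * b2 + v3 * c2" "g3 = v1 + v2 * b3 + v3 * c3"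
      using plane_interpolation[OF \<open>b1 \<noteq> b2\<close> line False] .
    with assms have "{Aff b1 c1 g1, Aff b2 c2 g2, Aff b3 c3 g3} \<subseteq> graph_plane v1 v2 v3" by simp
    then show ?thesis by (rule bexI[OF _ planes_intros(3)])
  qed
qed

lemma affine_triple_in_plane:
  fixes b1 b2 b3 :: "'a::field"
  assumes "b1 \<noteq> 0" "b2 \<noteq> 0" "b3 \<noteq> 0"
  shows "\<exists>P\<in>planes. {Aff b1 c1 g1, Aff b2 c2 g2, Aff b3 c3 g3} \<subseteq> P"
proof -
  consider "b1 = b2" "b2 = b3" | "b1 \<noteq> b2" | "b1 \<noteq> b3" | "b2 \<noteq> b3" by blast
  then show ?thesis
  proof cases
    case 1
    with assms have "{Aff b1 c1 g1, Aff b2 c2 g2, Aff b3 c3 g3} \<subseteq> level_plane b1" by simp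
    then show ?thesis using assms(1) by (intro bexI[OF _ planes_intros(1)])
  next
    case 2
    then show ?thesis by (rule affine_triple_in_plane_of_neq[OF assms])
  next
    case 3
    have "{Aff b1 c1 g1, Aff b2 c2 g2, Aff b3 c3 g3} = {Aff b1 c1 g1, Aff b3 c3 g3, Aff b2 c2 g2}" by auto
    then show ?thesis using affine_triple_in_plane_of_neq[OF assms(1,3,2) 3] by simp
  next
    case 4
    have "{Aff b1 c1 g1, Aff b2 c2 g2, Aff b3 c3 g3} = {Aff b2 c2 g2, Aff b3 c3 g3, Aff b1 c1 g1}" by auto
    then show ?thesis using affine_triple_in_plane_of_neq[OF assms(2,3,1) 4] by simp
  qed
qed

lemma point_at_infinity_and_two_points_in_plane:
  fixes y z :: "'a::field point"
  assumes p: "p \<in> line_at_infinity" and "y \<in> points" "z \<in> points"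
  shows "\<exists>P\<in>planes. {p, y, z} \<subseteq> P"
proof (cases "y \<in> line_at_infinity \<or> z \<in> line_at_infinity")
  case True
  have "{p, y, z} = {p, z, y}" by auto
  with True show ?thesis
    using two_points_at_infinity_and_point_in_plane[OF p _ assms(3), of y]
      two_points_at_infinity_and_point_in_plane[OF p _ assms(2), of z]
    by auto
next
  case False
  then obtain b c g b' c' g' where "b \<noteq> 0" "y = Aff b c g" "b' \<noteq> 0" "z = Aff b' c' g'"
    using assms(2,3) by (auto elim!: points_cases)
  then show ?thesis using point_at_infinity_and_affine_pair_in_plane[OF p] by simp
qed

lemma three_points_in_plane:
  fixes x y z :: "'a::field point"
  assumes "x \<in> points" "y \<in> points" "z \<in> points"
  shows "\<exists>P\<in>planes. {x, y, z} \<subseteq> P"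
proof (cases "x \<in> line_at_infinity \<or> y \<in> line_at_infinity \<or> z \<in> line_at_infinity")
  case True
  have "{x, y, z} = {y, x, z}" "{x, y, z} = {z, x, y}" by auto
  with True show ?thesis
    using point_at_infinity_and_two_points_in_plane[of x y z]
      point_at_infinity_and_two_points_in_plane[of y x z]
      point_at_infinity_and_two_points_in_plane[of z x y] assms
    by auto
next
  case False
  then obtain b1 c1 g1 b2 c2 g2 b3 c3 g3 where
    "b1 \<noteq> 0" "x = Aff b1 c1 g1" "b2 \<noteq> 0" "y = Aff b2 c2 g2" "b3 \<noteq> 0" "z = Aff b3 c3 g3"
    using assms by (auto elim!: points_cases)
  then show ?thesis using affine_triple_in_plane by simp
qed

lemma points_subset_block_closed:
  fixes k :: "'a::field"
  assumes closed: "block_closed blocks F" and k: "k \<noteq> 0" "k \<noteq> 1"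
    and span: "{Vert, Dir 0, Aff 1 0 0, Aff k 0 0} \<subseteq> F"
  shows "points \<subseteq> F"
proof -
  have "line_at_infinity \<subseteq> F"
    using block_closedD[OF closed blocks_intros(1), of Vert "Dir 0"] span by simp
  have vertical: "Aff b 0 g \<in> F" if "b = 1 \<or> b = k" for b g
  proof -
    have "b \<noteq> 0" using that k by auto
    have "vertical_line b 0 \<subseteq> F"
      using block_closedD[OF closed blocks_intros(2)[OF \<open>b \<noteq> 0\<close>, of 0], of Vert "Aff b 0 0"] that span
      by auto
    then show ?thesis by (simp add: vertical_line_subset_iff)
  qed
  have level: "Aff b c g \<in> F" if "b = 1 \<or> b = k" for b c g
  proof (cases "c = 0")
    case True
    then show ?thesis using vertical that by simp
  next
    case False
    have "b \<noteq> 0" using that k by auto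
    have "Dir (g / c) \<in> F" using \<open>line_at_infinity \<subseteq> F\<close> by auto
    then have "level_line b (g / c) 0 \<subseteq> F"
      using block_closedD[OF closed blocks_intros(3)[OF \<open>b \<noteq> 0\<close>, of "g / c" 0], of "Dir (g / c)" "Aff b 0 0"]
        vertical[OF that, of 0] by simp
    then have "Aff b c (0 + g / c * c) \<in> F" unfolding level_line_subset_iff by blast
    then show ?thesis using False by simp
  qed
  have "Aff b c g \<in> F" if "b \<noteq> 0" for b c g
  proof -
    have "transversal c 0 g 0 \<subseteq> F"
      using block_closedD[OF closed blocks_intros(4)[of c 0 g 0], of "Aff 1 c g" "Aff k c g"] level k by simp
    then show ?thesis using that by (auto simp: transversal_subset_iff)
  qed
  with \<open>line_at_infinity \<subseteq> F\<close> show ?thesis by (auto elim!: points_cases)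
qed

theorem PBD_dimension_points_blocks:
  fixes k :: "'a::{finite,field}"
  assumes "k \<noteq> 0" "k \<noteq> 1"
  shows "PBD_dimension (points :: 'a point set) blocks = 3"
proof -
  have flat_iff: "is_flat points blocks F \<longleftrightarrow> F \<subseteq> points \<and> block_closed blocks F" for F :: "'a point set"
    by (rule is_flat_iff_block_closed[OF is_PBD_points_blocks])
  have triples: "sets_in_proper_flats (points :: 'a point set) blocks 3"
    unfolding sets_in_proper_flats_def
  proof (intro allI impI)
    fix S :: "'a point set" assume "S \<subseteq> points \<and> card S = 3"
    then obtain x y z where "S = {x, y, z}" "x \<in> points" "y \<in> points" "z \<in> points"
      by (auto simp: card_3_iff)
    then have "\<exists>P\<in>planes. S \<subseteq> P" using three_points_in_plane by simp
    then obtain P where "P \<in> planes" "S \<subseteq> P" by blast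
    moreover have "is_proper_flat points blocks P"
      using \<open>P \<in> planes\<close> unfolding is_proper_flat_def flat_iff
      by (simp add: planes_block_closed planes_subset_points planes_neq_points[OF assms])
    ultimately show "\<exists>Y. is_proper_flat points blocks Y \<and> S \<subseteq> Y" by blast
  qed
  define S :: "'a point set" where "S = {Vert, Dir 0, Aff 1 0 0, Aff k 0 0}"
  have S: "S \<subseteq> points" "card S = Suc 3" using assms by (simp_all add: S_def)
  have spanning: "Y = points" if "is_flat points blocks Y" "S \<subseteq> Y" for Y
  proof -
    have "Y \<subseteq> points" "block_closed blocks Y" using that(1) flat_iff by simp_all
    moreover have "points \<subseteq> Y"
      using points_subset_block_closed[OF \<open>block_closed blocks Y\<close> assms] that(2) S_def by simp
    ultimately show ?thesis by blast
  qed
  show ?thesis by (rule PBD_dimension_eqI[OF finite_points triples S spanning])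
qed

section \<open>The field with four elements\<close>

text \<open>\<open>Gw\<close> and \<open>Gw2\<close> stand for \<open>\<omega>\<close> and \<open>\<omega>\<^sup>2 = \<omega> + 1\<close>.\<close>
datatype gf4 = G0 | G1 | Gw | Gw2

lemma gf4_all: "(\<forall>x. P x) \<longleftrightarrow> P G0 \<and> P G1 \<and> P Gw \<and> P Gw2"
  by (metis gf4.exhaust)

instantiation gf4 :: field
begin

definition "0 = G0"
definition "1 = G1"

fun plus_gf4 :: "gf4 \<Rightarrow> gf4 \<Rightarrow> gf4" where
  "plus_gf4 G0 y = y"
| "plus_gf4 x G0 = x"
| "plus_gf4 G1 G1 = G0" | "plus_gf4 G1 Gw = Gw2" | "plus_gf4 G1 Gw2 = Gw"
| "plus_gf4 Gw G1 = Gw2" | "plus_gf4 Gw Gw = G0" | "plus_gf4 Gw Gw2 = G1"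
| "plus_gf4 Gw2 G1 = Gw" | "plus_gf4 Gw2 Gw = G1" | "plus_gf4 Gw2 Gw2 = G0"

fun times_gf4 :: "gf4 \<Rightarrow> gf4 \<Rightarrow> gf4" where
  "times_gf4 G0 y = G0"
| "times_gf4 x G0 = G0"
| "times_gf4 G1 y = y"
| "times_gf4 x G1 = x"
| "times_gf4 Gw Gw = Gw2" | "times_gf4 Gw Gw2 = G1"
| "times_gf4 Gw2 Gw = G1" | "times_gf4 Gw2 Gw2 = Gw"

fun inverse_gf4 :: "gf4 \<Rightarrow> gf4" where
  "inverse_gf4 G0 = G0" | "inverse_gf4 G1 = G1" | "inverse_gf4 Gw = Gw2" | "inverse_gf4 Gw2 = Gw"

definition "uminus_gf4 (x :: gf4) = x"
definition "minus_gf4 (x :: gf4) y = x + y"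
definition "divide_gf4 (x :: gf4) y = x * inverse y"

instance
  by standard
    ((atomize (full))?, simp add: gf4_all zero_gf4_def one_gf4_def uminus_gf4_def minus_gf4_def divide_gf4_def)+

end

lemma UNIV_gf4: "UNIV = {G0, G1, Gw, Gw2}"
  using gf4.exhaust by auto

instance gf4 :: finite
  by standard (simp add: UNIV_gf4)

lemma CARD_gf4: "CARD(gf4) = 4"
  by (simp add: UNIV_gf4)

instance point :: (countable) countable
  by countable_datatype

theorem proposition3p10:
  shows "\<exists>(X::nat set) \<B>. is_PBD 53 {3,5} X \<B> \<and> PBD_dimension X \<B> = 3"
proof -
  have design: "is_PBD 53 {3, 5} (points :: gf4 point set) blocks"
    using is_PBD_points_blocks[where 'a = gf4] by (simp add: CARD_gf4)
  have dimension: "PBD_dimension (points :: gf4 point set) blocks = 3"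
    by (rule PBD_dimension_points_blocks[of Gw]) (simp_all add: zero_gf4_def one_gf4_def)
  let ?f = "to_nat :: gf4 point \<Rightarrow> nat"
  have "is_PBD 53 {3, 5} (?f ` points) (image ?f ` blocks)"
    by (rule is_PBD_image[OF inj_to_nat design])
  moreover have "PBD_dimension (?f ` points) (image ?f ` blocks) = 3"
    unfolding PBD_dimension_image[OF inj_to_nat] by (rule dimension)
  ultimately show ?thesis by blast
qed

end
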